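(* Let $n\ge1$ and let $P=\{(i,j)\colon 1\le i\le j\le n\}$ be the shifted staircase. Then $\sum_{p\in P}\mathbb{1}_p\equiv \frac{n(n+1)}{4}$.
   Context: $P$ is ordered by $(i,j)\le(i',j')$ iff $i\le i'$ and $j\le j'$. $\mathcal{J}(P)$ is the set of order ideals of $P$. For $x\in P$, $I\in\mathcal{J}(P)$: $\mathbb{1}_x(I)=1$ if $x\in I$, else $0$; $T_x^+(I)=1$ if $x$ is a minimal element of $P\setminus I$, else $0$; $T_x^-(I)=1$ if $x$ is a maximal element of $I$, else $0$; $T_x=T_x^+-T_x^-$. For $f,g\colon\mathcal{J}(P)\to\mathbb{R}$, $f\equiv g$ means $f-g=\sum_{x\in P}c_xT_x$ for some real constants $c_x$; a real number denotes the corresponding constant function. *)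

theory Defs
  imports Complex_Main "HOL-Library.Product_Order"
begin

text \<open>Posets are finite subsets of nat \<times> nat with the componentwise order
  (i,j) \<le> (i',j') iff i \<le> i' and j \<le> j' (the product order from Product_Order).\<close>

definition shifted_staircase :: "nat \<Rightarrow> (nat \<times> nat) set" where
  "shifted_staircase n = {(i, j). 1 \<le> i \<and> i \<le> j \<and> j \<le> n}"

definition order_ideals :: "(nat \<times> nat) set \<Rightarrow> (nat \<times> nat) set set" where
  "order_ideals P = {I. I \<subseteq> P \<and> (\<forall>x\<in>I. \<forall>y\<in>P. y \<le> x \<longrightarrow> y \<in> I)}"

definition ind :: "nat \<times> nat \<Rightarrow> (nat \<times> nat) set \<Rightarrow> real" where
  "ind x I = (if x \<in> I then 1 else 0)"

definition Tplus :: "(nat \<times> nat) set \<Rightarrow> nat \<times> nat \<Rightarrow> (nat \<times> nat) set \<Rightarrow> real" where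
  "Tplus P x I = (if x \<in> P - I \<and> (\<forall>y\<in>P - I. \<not> y < x) then 1 else 0)"

definition Tminus :: "(nat \<times> nat) set \<Rightarrow> nat \<times> nat \<Rightarrow> (nat \<times> nat) set \<Rightarrow> real" where
  "Tminus P x I = (if x \<in> I \<and> (\<forall>y\<in>I. \<not> x < y) then 1 else 0)"

definition toggle :: "(nat \<times> nat) set \<Rightarrow> nat \<times> nat \<Rightarrow> (nat \<times> nat) set \<Rightarrow> real" where
  "toggle P x I = Tplus P x I - Tminus P x I"

definition toggle_equiv :: "(nat \<times> nat) set \<Rightarrow> ((nat \<times> nat) set \<Rightarrow> real) \<Rightarrow> ((nat \<times> nat) set \<Rightarrow> real) \<Rightarrow> bool" where
  "toggle_equiv P f g \<longleftrightarrow> (\<exists>c :: nat \<times> nat \<Rightarrow> real. \<forall>I\<in>order_ideals P.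
      f I - g I = (\<Sum>x\<in>P. c x * toggle P x I))"

end

theory Submission
  imports Defs
begin

text \<open>
  Adding an element x = (i, j) to an order ideal J, with x minimal in P - J, turns T_x from 1
  into -1, can switch on T^+ only at the upper covers of x and switch off T^- only at its lower
  covers, and leaves all other T_y unchanged. In the shifted staircase the covers of x lie on the
  two diagonals next to the diagonal d = j - i of x, and on each of these diagonals exactly one
  of the two candidate toggles changes; both do on the main diagonal when d = 1, and the corner
  (1, n) has no neighbours on diagonal n. So if c_x depends only on d, through a weight with
  second difference 1 that vanishes at n and is halved on the main diagonal, the weighted sum of
  the T_x grows by exactly 1 with each added element, just like the number of elements. On the
  empty ideal only T^+ at (1, 1) is nonzero, so the constant is c_(1,1) = -n(n+1)/4.
\<close>

lemma Pair_less:
  fixes a c :: "'a::order" and b d :: "'b::order"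
  shows "(a, b) < (c, d) \<longleftrightarrow> a \<le> c \<and> b \<le> d \<and> (a < c \<or> b < d)"
  by (auto simp: less_prod_def less_le)

lemma order_ideals_subset: "I \<in> order_ideals P \<Longrightarrow> I \<subseteq> P"
  by (simp add: order_ideals_def)

lemma order_ideals_downward_closed:
  "I \<in> order_ideals P \<Longrightarrow> x \<in> I \<Longrightarrow> y \<in> P \<Longrightarrow> y \<le> x \<Longrightarrow> y \<in> I"
  by (auto simp: order_ideals_def)

lemma insert_order_ideal:
  assumes "J \<in> order_ideals P" "x \<in> P" "\<And>y. y \<in> P \<Longrightarrow> y < x \<Longrightarrow> y \<in> J"
  shows "insert x J \<in> order_ideals P"
  using assms by (auto simp: order_ideals_def order.order_iff_strict)

lemma remove_maximal_order_ideal: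
  assumes "I \<in> order_ideals P" "\<And>y. y \<in> I \<Longrightarrow> \<not> x < y"
  shows "I - {x} \<in> order_ideals P"
  using assms by (auto simp: order_ideals_def order.order_iff_strict)

lemma order_ideals_induct [consumes 2, case_names empty insert]:
  assumes "finite P" "I \<in> order_ideals P"
    and empty: "Q {}"
    and insert: "\<And>J x. J \<in> order_ideals P \<Longrightarrow> x \<in> P \<Longrightarrow> x \<notin> J \<Longrightarrow>
      (\<And>y. y \<in> P \<Longrightarrow> y < x \<Longrightarrow> y \<in> J) \<Longrightarrow> Q J \<Longrightarrow> Q (insert x J)"
  shows "Q I"
proof -
  have "finite I"
    using assms(1,2) by (metis order_ideals_subset finite_subset)
  then show ?thesis
    using assms(2)
  proof (induction I rule: finite_remove_induct)
    case empty
    show ?case by (fact \<open>Q {}\<close>)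
  next
    case (remove I)
    obtain x where x: "x \<in> I" and maximal: "\<And>y. y \<in> I \<Longrightarrow> \<not> x < y"
      using finite_has_maximal[OF remove.hyps(1,2)] by (auto simp: less_le)
    have J: "I - {x} \<in> order_ideals P"
      using remove.prems maximal by (rule remove_maximal_order_ideal)
    have "x \<in> P"
      using x remove.prems order_ideals_subset by blast
    moreover have "y \<in> I - {x}" if "y \<in> P" "y < x" for y
      using that x remove.prems order_ideals_downward_closed by fastforce
    ultimately have "Q (insert x (I - {x}))"
      using insert[OF J] remove.IH[OF x J] by blast
    then show ?case
      using x by (simp add: insert_absorb)
  qed
qed

lemma sum_ind_eq_card:
  assumes "finite P" "I \<subseteq> P"
  shows "(\<Sum>p\<in>P. ind p I) = real (card I)"
proof -
  have "(\<Sum>p\<in>P. ind p I) = (\<Sum>p\<in>P \<inter> I. 1)"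
    using assms(1) by (simp add: ind_def sum.inter_restrict[symmetric])
  also have "\<dots> = real (card I)"
    using assms(2) by (simp add: Int_absorb1)
  finally show ?thesis .
qed

lemma Tplus_outside: "y \<notin> P \<Longrightarrow> Tplus P y I = 0"
  by (simp add: Tplus_def)

lemma Tminus_outside: "I \<subseteq> P \<Longrightarrow> y \<notin> P \<Longrightarrow> Tminus P y I = 0"
  by (auto simp: Tminus_def)

lemma toggle_insert:
  assumes J: "J \<in> order_ideals P" and x: "x \<in> P" "x \<notin> J"
    and below: "\<And>y. y \<in> P \<Longrightarrow> y < x \<Longrightarrow> y \<in> J"
  shows "toggle P y (insert x J) = toggle P y J - (if y = x then 2 else 0)
    + (if x < y then Tplus P y (insert x J) else 0) + (if y < x then Tminus P y J else 0)"
proof -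
  have above: "z \<notin> J" if "x \<le> z" for z
    using that x order_ideals_downward_closed[OF J] by blast
  consider "y = x" | "x < y" | "y < x" | "y \<noteq> x" "\<not> x < y" "\<not> y < x"
    by blast
  then show ?thesis
  proof cases
    case 1
    have "Tplus P x J = 1" "Tplus P x (insert x J) = 0"
      using x below by (auto simp: Tplus_def)
    moreover have "Tminus P x (insert x J) = 1" "Tminus P x J = 0"
      using x above by (auto simp: Tminus_def less_le)
    ultimately show ?thesis
      using 1 by (simp add: toggle_def)
  next
    case 2
    have "Tplus P y J = 0"
      using x 2 by (auto simp: Tplus_def)
    moreover have "Tminus P y (insert x J) = 0" "Tminus P y J = 0"
      using 2 above by (auto simp: Tminus_def)
    ultimately show ?thesis
      using 2 by (simp add: toggle_def)
  next
    case 3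
    have "Tplus P y (insert x J) = 0" "Tplus P y J = 0"
      using 3 below by (auto simp: Tplus_def)
    moreover have "Tminus P y (insert x J) = 0"
      using 3 by (auto simp: Tminus_def)
    ultimately show ?thesis
      using 3 by (simp add: toggle_def)
  next
    case 4
    then have "Tplus P y (insert x J) = Tplus P y J" "Tminus P y (insert x J) = Tminus P y J"
      by (auto simp: Tplus_def Tminus_def)
    then show ?thesis
      using 4 by (simp add: toggle_def)
  qed
qed

lemma toggle_sum_insert:
  assumes "finite P" "J \<in> order_ideals P" "x \<in> P" "x \<notin> J"
    and "\<And>y. y \<in> P \<Longrightarrow> y < x \<Longrightarrow> y \<in> J"
  shows "(\<Sum>y\<in>P. c y * toggle P y (insert x J)) = (\<Sum>y\<in>P. c y * toggle P y J) - 2 * c x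
    + (\<Sum>y\<in>P. if x < y then c y * Tplus P y (insert x J) else 0)
    + (\<Sum>y\<in>P. if y < x then c y * Tminus P y J else 0)"
proof -
  have "(\<Sum>y\<in>P. c y * toggle P y (insert x J)) = (\<Sum>y\<in>P. c y * toggle P y J
      - (if y = x then 2 * c x else 0) + (if x < y then c y * Tplus P y (insert x J) else 0)
      + (if y < x then c y * Tminus P y J else 0))"
    by (intro sum.cong) (simp_all add: toggle_insert[OF assms(2-5)] algebra_simps)
  then show ?thesis
    using assms(1,3) by (simp add: sum.distrib sum_subtractf)
qed

lemma sum_eq_two_points:
  assumes "finite A" "a \<noteq> b" "\<And>y. y \<in> A \<Longrightarrow> f y \<noteq> 0 \<Longrightarrow> y = a \<or> y = b"
    and "a \<notin> A \<Longrightarrow> f a = 0" "b \<notin> A \<Longrightarrow> f b = 0"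
  shows "sum f A = f a + f b"
proof -
  have "sum f A = sum f (A \<inter> {a, b})"
    using assms(1,3) by (intro sum.mono_neutral_right) auto
  also have "\<dots> = sum f {a, b}"
    using assms(4,5) by (intro sum.mono_neutral_left) auto
  finally show ?thesis
    using assms(2) by simp
qed

lemma mem_shifted_staircase [simp]:
  "(a, b) \<in> shifted_staircase n \<longleftrightarrow> 1 \<le> a \<and> a \<le> b \<and> b \<le> n"
  by (simp add: shifted_staircase_def)

lemma finite_shifted_staircase: "finite (shifted_staircase n)"
proof -
  have "shifted_staircase n \<subseteq> {0..n} \<times> {0..n}"
    by (auto simp: shifted_staircase_def)
  then show ?thesis
    by (rule finite_subset) simp
qed

lemma shifted_staircase_below:
  assumes "z \<in> shifted_staircase n" "z < (a, b)"
  shows "(2 \<le> a \<and> z \<le> (a - 1, b)) \<or> (a < b \<and> z \<le> (a, b - 1))"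
  using assms by (cases z) (auto simp: Pair_less)

lemma shifted_staircase_above:
  assumes "z \<in> shifted_staircase n" "(a, b) < z"
  shows "(b < n \<and> (a, b + 1) \<le> z) \<or> (a < b \<and> (a + 1, b) \<le> z)"
  using assms by (cases z) (auto simp: Pair_less)

lemma Tplus_shifted_staircase:
  assumes I: "I \<in> order_ideals (shifted_staircase n)"
  shows "Tplus (shifted_staircase n) (a, b) I =
    (if (a, b) \<in> shifted_staircase n \<and> (a, b) \<notin> I
        \<and> (2 \<le> a \<longrightarrow> (a - 1, b) \<in> I) \<and> (a < b \<longrightarrow> (a, b - 1) \<in> I) then 1 else 0)"
proof -
  let ?P = "shifted_staircase n"
  have "(\<forall>z\<in>?P - I. \<not> z < (a, b)) \<longleftrightarrow> (2 \<le> a \<longrightarrow> (a - 1, b) \<in> I) \<and> (a < b \<longrightarrow> (a, b - 1) \<in> I)"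
    if "(a, b) \<in> ?P"
  proof
    assume minimal: "\<forall>z\<in>?P - I. \<not> z < (a, b)"
    have "(a - 1, b) \<in> ?P \<and> (a - 1, b) < (a, b)" if "2 \<le> a"
      using \<open>(a, b) \<in> ?P\<close> that by (auto simp: Pair_less)
    moreover have "(a, b - 1) \<in> ?P \<and> (a, b - 1) < (a, b)" if "a < b"
      using \<open>(a, b) \<in> ?P\<close> that by (auto simp: Pair_less)
    ultimately show "(2 \<le> a \<longrightarrow> (a - 1, b) \<in> I) \<and> (a < b \<longrightarrow> (a, b - 1) \<in> I)"
      using minimal by blast
  next
    assume "(2 \<le> a \<longrightarrow> (a - 1, b) \<in> I) \<and> (a < b \<longrightarrow> (a, b - 1) \<in> I)"
    then show "\<forall>z\<in>?P - I. \<not> z < (a, b)"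
      using shifted_staircase_below order_ideals_downward_closed[OF I] by blast
  qed
  then show ?thesis
    by (auto simp: Tplus_def)
qed

lemma Tminus_shifted_staircase:
  assumes I: "I \<in> order_ideals (shifted_staircase n)"
  shows "Tminus (shifted_staircase n) (a, b) I =
    (if (a, b) \<in> I \<and> (b < n \<longrightarrow> (a, b + 1) \<notin> I) \<and> (a < b \<longrightarrow> (a + 1, b) \<notin> I) then 1 else 0)"
proof -
  let ?P = "shifted_staircase n"
  have "(\<forall>z\<in>I. \<not> (a, b) < z) \<longleftrightarrow> (b < n \<longrightarrow> (a, b + 1) \<notin> I) \<and> (a < b \<longrightarrow> (a + 1, b) \<notin> I)"
    if ab: "(a, b) \<in> I"
  proof
    assume "\<forall>z\<in>I. \<not> (a, b) < z"
    then show "(b < n \<longrightarrow> (a, b + 1) \<notin> I) \<and> (a < b \<longrightarrow> (a + 1, b) \<notin> I)"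
      by (auto simp: Pair_less)
  next
    assume covers: "(b < n \<longrightarrow> (a, b + 1) \<notin> I) \<and> (a < b \<longrightarrow> (a + 1, b) \<notin> I)"
    have "(a, b) \<in> ?P"
      using ab order_ideals_subset[OF I] by blast
    show "\<forall>z\<in>I. \<not> (a, b) < z"
    proof (intro ballI notI)
      fix z
      assume "z \<in> I" "(a, b) < z"
      moreover have "z \<in> ?P"
        using \<open>z \<in> I\<close> order_ideals_subset[OF I] by blast
      ultimately show False
        using shifted_staircase_above[of z n a b] covers \<open>(a, b) \<in> ?P\<close>
          order_ideals_downward_closed[OF I \<open>z \<in> I\<close>] by auto
    qed
  qed
  then show ?thesis
    by (auto simp: Tminus_def)
qed

lemma sum_above_shifted_staircase:
  fixes f :: "nat \<times> nat \<Rightarrow> real" and n :: nat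
  defines "P \<equiv> shifted_staircase n"
  assumes I: "I \<in> order_ideals P" and x: "(i, j) \<in> P"
    and outside: "\<And>z. (i, j) < z \<Longrightarrow> z \<notin> I"
  shows "(\<Sum>y\<in>P. if (i, j) < y then f y * Tplus P y I else 0)
    = f (i, j + 1) * Tplus P (i, j + 1) I + f (i + 1, j) * Tplus P (i + 1, j) I"
proof -
  have cover: "y = (i, j + 1) \<or> y = (i + 1, j)"
    if y: "y \<in> P" "(i, j) < y" and "Tplus P y I \<noteq> 0" for y
  proof -
    have minimal: "\<not> z < y" if "z \<in> P" "z \<notin> I" for z
      using \<open>Tplus P y I \<noteq> 0\<close> that by (auto simp: Tplus_def split: if_splits)
    have "(i, j) \<le> (i, j + 1)" "(i, j) \<le> (i + 1, j)"
      by simp_all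
    moreover have "(i, j + 1) \<in> P" if "j < n"
      using x that by (simp add: P_def)
    moreover have "(i + 1, j) \<in> P" if "i < j"
      using x that by (simp add: P_def)
    ultimately show ?thesis
      using shifted_staircase_above[of y n i j] y minimal outside
      by (auto simp: P_def order.order_iff_strict Pair_less)
  qed
  let ?g = "\<lambda>y. if (i, j) < y then f y * Tplus P y I else 0"
  have "sum ?g P = ?g (i, j + 1) + ?g (i + 1, j)"
  proof (rule sum_eq_two_points)
    show "finite P"
      by (simp add: P_def finite_shifted_staircase)
    show "y = (i, j + 1) \<or> y = (i + 1, j)" if "y \<in> P" "?g y \<noteq> 0" for y
      using that cover by (metis mult_zero_right)
  qed (simp_all add: Tplus_outside)
  then show ?thesis
    by (simp add: Pair_less)
qed

lemma sum_below_shifted_staircase: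
  fixes f :: "nat \<times> nat \<Rightarrow> real" and n :: nat
  defines "P \<equiv> shifted_staircase n"
  assumes I: "I \<in> order_ideals P" and x: "(i, j) \<in> P"
    and inside: "\<And>z. z \<in> P \<Longrightarrow> z < (i, j) \<Longrightarrow> z \<in> I"
  shows "(\<Sum>y\<in>P. if y < (i, j) then f y * Tminus P y I else 0)
    = f (i - 1, j) * Tminus P (i - 1, j) I + f (i, j - 1) * Tminus P (i, j - 1) I"
proof -
  have "I \<subseteq> P"
    using I by (rule order_ideals_subset)
  have cover: "y = (i - 1, j) \<or> y = (i, j - 1)"
    if y: "y \<in> P" "y < (i, j)" and "Tminus P y I \<noteq> 0" for y
  proof -
    have maximal: "\<not> y < z" if "z \<in> I" for z
      using \<open>Tminus P y I \<noteq> 0\<close> that by (auto simp: Tminus_def split: if_splits)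
    have "(i - 1, j) \<in> P \<and> (i - 1, j) < (i, j)" if "2 \<le> i"
      using x that by (auto simp: P_def Pair_less)
    moreover have "(i, j - 1) \<in> P \<and> (i, j - 1) < (i, j)" if "i < j"
      using x that by (auto simp: P_def Pair_less)
    ultimately have "(2 \<le> i \<longrightarrow> (i - 1, j) \<in> I) \<and> (i < j \<longrightarrow> (i, j - 1) \<in> I)"
      using inside by blast
    then show ?thesis
      using shifted_staircase_below[of y n i j] y maximal
      by (auto simp: P_def order.order_iff_strict)
  qed
  let ?g = "\<lambda>y. if y < (i, j) then f y * Tminus P y I else 0"
  have "sum ?g P = ?g (i - 1, j) + ?g (i, j - 1)"
  proof (rule sum_eq_two_points)
    show "finite P"
      by (simp add: P_def finite_shifted_staircase)
    show "(i - 1, j) \<noteq> (i, j - 1)"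
      using x by (auto simp: P_def)
    show "y = (i - 1, j) \<or> y = (i, j - 1)" if "y \<in> P" "?g y \<noteq> 0" for y
      using that cover by (metis mult_zero_right)
  qed (simp_all add: Tminus_outside[OF \<open>I \<subseteq> P\<close>])
  then show ?thesis
    using x by (simp add: P_def Pair_less)
qed

lemma shifted_staircase_outer_neighbours:
  fixes n :: nat
  defines "P \<equiv> shifted_staircase n"
  assumes J: "J \<in> order_ideals P" and x: "(i, j) \<in> P" "(i, j) \<notin> J"
    and below: "\<And>y. y \<in> P \<Longrightarrow> y < (i, j) \<Longrightarrow> y \<in> J"
  shows "Tplus P (i, j + 1) (insert (i, j) J) + Tminus P (i - 1, j) J
    = (if i = 1 \<and> j = n then 0 else 1)"
proof -
  have "(i - 1, j) \<in> J \<longleftrightarrow> 2 \<le> i"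
  proof
    assume "(i - 1, j) \<in> J"
    then show "2 \<le> i"
      using order_ideals_subset[OF J] by (force simp: P_def)
  next
    assume "2 \<le> i"
    then have "(i - 1, j) \<in> P" "(i - 1, j) < (i, j)"
      using x by (auto simp: P_def Pair_less)
    then show "(i - 1, j) \<in> J"
      by (rule below)
  qed
  moreover have "(i, j + 1) \<notin> J"
    using x order_ideals_downward_closed[OF J] by fastforce
  moreover have "insert (i, j) J \<in> order_ideals P"
    using J x(1) below by (rule insert_order_ideal)
  ultimately show ?thesis
    using x J unfolding P_def
    by (auto simp: Tplus_shifted_staircase Tminus_shifted_staircase)
qed

lemma shifted_staircase_inner_neighbours:
  fixes n :: nat
  defines "P \<equiv> shifted_staircase n"
  assumes J: "J \<in> order_ideals P" and x: "(i, j) \<in> P" "(i, j) \<notin> J"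
    and below: "\<And>y. y \<in> P \<Longrightarrow> y < (i, j) \<Longrightarrow> y \<in> J"
  shows "Tplus P (i + 1, j) (insert (i, j) J) + Tminus P (i, j - 1) J
    = (if i = j then 0 else if i + 1 = j then 2 else 1)"
proof (cases "i < j")
  case True
  then have "(i, j - 1) \<in> P" "(i, j - 1) < (i, j)"
    using x by (auto simp: P_def Pair_less)
  then have "(i, j - 1) \<in> J"
    by (rule below)
  moreover have "(i + 1, j) \<notin> J"
    using x order_ideals_downward_closed[OF J] by fastforce
  moreover have "insert (i, j) J \<in> order_ideals P"
    using J x(1) below by (rule insert_order_ideal)
  ultimately show ?thesis
    using True x J unfolding P_def
    by (auto simp: Tplus_shifted_staircase Tminus_shifted_staircase)
next
  case False
  then have "(i + 1, j) \<notin> P" "(i, j - 1) \<notin> P"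
    using x by (auto simp: P_def)
  then show ?thesis
    using False x Tplus_outside Tminus_outside[OF order_ideals_subset[OF J]] by (simp add: P_def)
qed

definition diagonal_weight :: "nat \<Rightarrow> nat \<Rightarrow> real" where
  "diagonal_weight n d = (real d * (real d + 1) - real n * (real n + 1)) / 2"

lemma diagonal_weight_self [simp]: "diagonal_weight n n = 0"
  by (simp add: diagonal_weight_def)

lemma diagonal_weight_Suc: "diagonal_weight n (Suc d) = diagonal_weight n d + real (Suc d)"
  by (simp add: diagonal_weight_def field_simps)

fun staircase_coeff :: "nat \<Rightarrow> nat \<times> nat \<Rightarrow> real" where
  "staircase_coeff n (i, j) = (if i = j then diagonal_weight n 0 / 2 else diagonal_weight n (j - i))"

lemma staircase_coeff_second_difference:
  assumes "i \<le> j"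
  shows "diagonal_weight n (j - i + 1) + (if i < j then diagonal_weight n (j - i - 1) else 0)
    = 2 * staircase_coeff n (i, j) + 1"
proof (cases "i = j")
  case True
  then show ?thesis
    by (simp add: diagonal_weight_Suc)
next
  case False
  then obtain e where "j - i = Suc e"
    using assms by (metis Suc_diff_Suc le_neq_implies_less)
  then show ?thesis
    using False assms by (simp add: diagonal_weight_Suc)
qed

lemma shifted_staircase_toggle_sum_insert:
  fixes n :: nat
  defines "P \<equiv> shifted_staircase n" and "c \<equiv> staircase_coeff n"
  assumes J: "J \<in> order_ideals P" and x: "(i, j) \<in> P" "(i, j) \<notin> J"
    and below: "\<And>y. y \<in> P \<Longrightarrow> y < (i, j) \<Longrightarrow> y \<in> J"
  shows "(\<Sum>y\<in>P. c y * toggle P y (insert (i, j) J)) = (\<Sum>y\<in>P. c y * toggle P y J) + 1"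
proof -
  let ?J' = "insert (i, j) J" and ?d = "j - i"
  have ij: "1 \<le> i" "i \<le> j" "j \<le> n"
    using x by (auto simp: P_def)
  have J': "?J' \<in> order_ideals P"
    using J x(1) below by (rule insert_order_ideal)
  have above: "z \<notin> ?J'" if "(i, j) < z" for z
    using that x J order_ideals_downward_closed less_imp_le by fastforce
  have upper: "(\<Sum>y\<in>P. if (i, j) < y then c y * Tplus P y ?J' else 0)
      = c (i, j + 1) * Tplus P (i, j + 1) ?J' + c (i + 1, j) * Tplus P (i + 1, j) ?J'"
    using J' x(1) above unfolding P_def by (rule sum_above_shifted_staircase)
  have lower: "(\<Sum>y\<in>P. if y < (i, j) then c y * Tminus P y J else 0)
      = c (i - 1, j) * Tminus P (i - 1, j) J + c (i, j - 1) * Tminus P (i, j - 1) J"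
    using J x(1) below unfolding P_def by (rule sum_below_shifted_staircase)
  have outer: "c (i, j + 1) * Tplus P (i, j + 1) ?J' + c (i - 1, j) * Tminus P (i - 1, j) J
      = diagonal_weight n (?d + 1)"
  proof -
    have "c (i, j + 1) = diagonal_weight n (?d + 1)" "c (i - 1, j) = diagonal_weight n (?d + 1)"
      using ij by (auto simp: c_def Suc_diff_le)
    moreover have "?d + 1 = n" if "i = 1 \<and> j = n"
      using that ij by simp
    ultimately show ?thesis
      using shifted_staircase_outer_neighbours[OF J[unfolded P_def] x[unfolded P_def]] below
      by (auto simp: P_def simp flip: distrib_left)
  qed
  have inner: "c (i + 1, j) * Tplus P (i + 1, j) ?J' + c (i, j - 1) * Tminus P (i, j - 1) J
      = (if i < j then diagonal_weight n (?d - 1) else 0)"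
  proof -
    have "c (i + 1, j) = c (i, j - 1)" if "i < j"
      using that by (auto simp: c_def)
    then show ?thesis
      using shifted_staircase_inner_neighbours[OF J[unfolded P_def] x[unfolded P_def]] below ij
      by (auto simp: P_def c_def simp flip: distrib_left)
  qed
  show ?thesis
    using toggle_sum_insert[OF _ J x below, of c] upper lower outer inner
      staircase_coeff_second_difference[OF \<open>i \<le> j\<close>, of n]
    by (simp add: P_def c_def finite_shifted_staircase)
qed

lemma shifted_staircase_toggle_sum_empty:
  assumes "1 \<le> n"
  shows "(\<Sum>y\<in>shifted_staircase n. staircase_coeff n y * toggle (shifted_staircase n) y {})
    = - real n * (real n + 1) / 4"
proof -
  have "{} \<in> order_ideals (shifted_staircase n)"
    by (simp add: order_ideals_def)
  then have "staircase_coeff n y * toggle (shifted_staircase n) y {}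
      = (if y = (1, 1) then staircase_coeff n (1, 1) else 0)" for y
    using assms by (cases y) (auto simp: toggle_def Tplus_shifted_staircase Tminus_shifted_staircase)
  then show ?thesis
    using assms by (simp add: finite_shifted_staircase diagonal_weight_def)
qed

lemma shifted_staircase_toggle_sum:
  assumes "1 \<le> n" "I \<in> order_ideals (shifted_staircase n)"
  shows "(\<Sum>y\<in>shifted_staircase n. staircase_coeff n y * toggle (shifted_staircase n) y I)
    = real (card I) - real n * (real n + 1) / 4"
  using finite_shifted_staircase assms(2)
proof (induction rule: order_ideals_induct)
  case empty
  show ?case
    using shifted_staircase_toggle_sum_empty[OF assms(1)] by simp
next
  case (insert J x)
  have "finite J"
    using insert.hyps(1) finite_shifted_staircase order_ideals_subset finite_subset by metis
  then show ?case
    using shifted_staircase_toggle_sum_insert[of J n "fst x" "snd x"] insert by simp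
qed

theorem corollary3p18:
  fixes n :: nat
  assumes "n \<ge> 1"
  shows "toggle_equiv (shifted_staircase n)
           (\<lambda>I. \<Sum>p\<in>shifted_staircase n. ind p I)
           (\<lambda>I. real n * (real n + 1) / 4)"
proof -
  have "(\<Sum>p\<in>shifted_staircase n. ind p I) - real n * (real n + 1) / 4
      = (\<Sum>y\<in>shifted_staircase n. staircase_coeff n y * toggle (shifted_staircase n) y I)"
    if "I \<in> order_ideals (shifted_staircase n)" for I
    using sum_ind_eq_card[OF finite_shifted_staircase order_ideals_subset[OF that]]
      shifted_staircase_toggle_sum[OF assms that] by simp
  then show ?thesis
    unfolding toggle_equiv_def by blast
qed

end
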